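(* Let $b>1$ be an integer and let $H$ be a generalized $b$-happy function with digit mean $\mu$ and digit standard deviation $\sigma$. There exists $N$ such that for every $n>N$ and every $n$-strict interval $I$ there exists $m\in\mathbb{N}$ with $$\left[\mu m-\sigma m^{5/8},\ \mu m+\sigma m^{5/8}\right]\subseteq I.$$
   Context: A generalized $b$-happy function: fix an integer $b>1$ and non-negative integers $h(0),\dots,h(b-1)$ with $h(0)=0$, $h(1)=1$; for $n=\sum_{i=0}^k a_ib^i$ in base $b$, $H(n)=\sum_{i=0}^k h(a_i)$. Digit mean $\mu=\frac1b\sum_{j=0}^{b-1}h(j)$, digit variance $\sigma^2=\frac1b\sum_{j=0}^{b-1}(h(j)-\mu)^2$. An integer interval $[a,c]$ ($a,c$ real) is the set of integers $x$ with $a\le x\le c$; $|I|$ is its cardinality. For a positive integer $n$, an integer interval $I$ is $n$-strict if $I\subseteq[b^{n-1},b^n-1]$ and $|I|=b^{3n/4}$. *)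

theory Defs
  imports Complex_Main
begin

definition happy_weights :: "nat \<Rightarrow> (nat \<Rightarrow> nat) \<Rightarrow> bool" where
  "happy_weights b h \<longleftrightarrow> b > 1 \<and> h 0 = 0 \<and> h 1 = 1"

fun happyH :: "nat \<Rightarrow> (nat \<Rightarrow> nat) \<Rightarrow> nat \<Rightarrow> nat" where
  "happyH b h n = (if n = 0 \<or> b \<le> 1 then h n else h (n mod b) + happyH b h (n div b))"

definition digit_mean :: "nat \<Rightarrow> (nat \<Rightarrow> nat) \<Rightarrow> real" where
  "digit_mean b h = (\<Sum>j<b. real (h j)) / real b"

definition digit_var :: "nat \<Rightarrow> (nat \<Rightarrow> nat) \<Rightarrow> real" where
  "digit_var b h = (\<Sum>j<b. (real (h j) - digit_mean b h)^2) / real b"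

definition digit_sd :: "nat \<Rightarrow> (nat \<Rightarrow> nat) \<Rightarrow> real" where
  "digit_sd b h = sqrt (digit_var b h)"

definition int_interval :: "real \<Rightarrow> real \<Rightarrow> int set" where
  "int_interval a c = {x::int. a \<le> real_of_int x \<and> real_of_int x \<le> c}"

definition is_int_interval :: "int set \<Rightarrow> bool" where
  "is_int_interval I \<longleftrightarrow> (\<exists>a c. I = int_interval a c)"

definition n_strict :: "nat \<Rightarrow> nat \<Rightarrow> int set \<Rightarrow> bool" where
  "n_strict b n I \<longleftrightarrow> is_int_interval I \<and>
     I \<subseteq> {int b ^ (n - 1) .. int b ^ n - 1} \<and>
     real (card I) = real b powr (3 * real n / 4)"

end

theory Submission
  imports Defs "HOL-Real_Asymp.Real_Asymp"
begin

text \<open>An \<open>n\<close>-strict interval has \<open>b^(3n/4)\<close> elements and lies below \<open>b^n\<close>.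
  Take \<open>m\<close> maximal with \<open>\<mu> m\<close> at most the midpoint of the interval: then \<open>\<mu> m\<close> is within
  \<open>\<mu>\<close> of the midpoint, and \<open>m \<le> b^(n+2)\<close> because \<open>\<mu> \<ge> 1/b\<close>. So the window around \<open>\<mu> m\<close>
  has radius \<open>\<sigma> m^(5/8) = O(b^(5n/8))\<close>, which is eventually below half the length of the
  interval minus \<open>\<mu> + 1\<close>.\<close>

lemma int_interval_eq_atLeastAtMost_card:
  assumes "is_int_interval I" "finite I" "I \<noteq> {}"
  shows "I = {Min I .. Min I + int (card I) - 1}"
proof -
  obtain a c where I: "I = int_interval a c"
    using assms(1) unfolding is_int_interval_def by blast
  have "Min I \<in> I" "Max I \<in> I"
    using assms(2,3) by simp_all
  then have "{Min I .. Max I} \<subseteq> I"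
    unfolding I int_interval_def by (auto intro: order_trans)
  moreover have "I \<subseteq> {Min I .. Max I}"
    using assms(2) by auto
  ultimately have I_eq: "I = {Min I .. Max I}"
    by blast
  have "card I = nat (Max I + 1 - Min I)"
    by (subst I_eq) simp
  moreover have "Min I \<le> Max I"
    using assms(2,3) by simp
  ultimately show ?thesis
    using I_eq by simp
qed

lemma int_interval_subset_atLeastAtMost:
  assumes "real_of_int A \<le> lo" "hi \<le> real_of_int B"
  shows "int_interval lo hi \<subseteq> {A .. B}"
  using assms unfolding int_interval_def by auto

lemma n_strict_eq_atLeastAtMost:
  assumes "n_strict b n I" "b > 0"
  obtains A where "I = {A .. A + int (card I) - 1}" "0 \<le> A" "A \<le> int b ^ n"
    and "card I \<le> b ^ n" "real (card I) = real b powr (3 * real n / 4)"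
proof -
  have card: "real (card I) = real b powr (3 * real n / 4)"
    and I_sub: "I \<subseteq> {int b ^ (n - 1) .. int b ^ n - 1}"
    using assms(1) unfolding n_strict_def by simp_all
  then have "real (card I) > 0"
    using assms(2) by simp
  then have "card I > 0"
    by simp
  then have fin: "finite I" and ne: "I \<noteq> {}"
    using card_gt_0_iff by blast+
  have "{int b ^ (n - 1) .. int b ^ n - 1} \<subseteq> {0 .. int b ^ n - 1}"
    by (subst atLeastatMost_subset_iff) simp
  with I_sub have I_sub0: "I \<subseteq> {0 .. int b ^ n - 1}"
    by (rule subset_trans)
  have "Min I \<in> I"
    using fin ne by simp
  then have "0 \<le> Min I" "Min I \<le> int b ^ n"
    using I_sub0 by auto
  moreover have "card I \<le> card {0 .. int b ^ n - 1}"
    using I_sub0 by (intro card_mono) auto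
  then have "card I \<le> b ^ n"
    by (simp flip: of_nat_power)
  ultimately show ?thesis
    using that int_interval_eq_atLeastAtMost_card assms(1) fin ne card
    unfolding n_strict_def by blast
qed

lemma digit_mean_ge_inverse_base:
  assumes "b > 1" "h 1 = 1"
  shows "digit_mean b h \<ge> 1 / real b"
proof -
  have "real (h 1) \<le> (\<Sum>j<b. real (h j))"
    using assms(1) by (intro member_le_sum) auto
  then show ?thesis
    using assms unfolding digit_mean_def by (simp add: divide_right_mono)
qed

lemma digit_sd_nonneg: "digit_sd b h \<ge> 0"
  unfolding digit_sd_def digit_var_def by (auto intro!: sum_nonneg divide_nonneg_nonneg)

lemma ex_nat_mult_le_less:
  fixes \<mu> t :: real
  assumes "\<mu> > 0" "t \<ge> 0"
  obtains m :: nat where "\<mu> * real m \<le> t" "t < \<mu> * real m + \<mu>"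
proof -
  define m where "m = nat \<lfloor>t / \<mu>\<rfloor>"
  have "real m = of_int \<lfloor>t / \<mu>\<rfloor>"
    unfolding m_def using assms by simp
  then have "real m \<le> t / \<mu>" "t / \<mu> < real m + 1"
    by linarith+
  then show ?thesis
    using that assms(1) by (simp add: field_simps)
qed

lemma eventually_powr_five_eighths_le_powr_three_quarters:
  fixes b c u :: real
  assumes "b > 1"
  shows "eventually (\<lambda>n. c * (b ^ (n + 2)) powr (5/8) + u \<le> b powr (3 * real n / 4) / 2) sequentially"
  using assms by real_asymp

lemma le_power_add_two_if_mult_le:
  fixes \<mu> x :: real
  assumes "b > 1" "\<mu> \<ge> 1 / real b" "\<mu> * x \<le> 2 * real b ^ n"
  shows "x \<le> real b ^ (n + 2)"
proof -
  have "1 / real b > 0"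
    using assms(1) by simp
  with assms(2) have "\<mu> > 0"
    by linarith
  note \<open>\<mu> * x \<le> 2 * real b ^ n\<close>
  also have "2 * real b ^ n \<le> \<mu> * (2 * real b ^ n * real b)"
    using assms(1,2) by (simp add: field_simps)
  finally have "x \<le> 2 * real b ^ n * real b"
    using \<open>\<mu> > 0\<close> by simp
  also have "\<dots> \<le> real b ^ (n + 2)"
    using assms(1) by (simp add: power_add power2_eq_square mult_right_mono)
  finally show ?thesis .
qed

lemma window_subset_n_strict:
  assumes "b > 1" "\<mu> \<ge> 1 / real b" "\<sigma> \<ge> 0" "n_strict b n I"
    and small: "\<sigma> * (real b ^ (n + 2)) powr (5/8) + (\<mu> + 1) \<le> real b powr (3 * real n / 4) / 2"
  shows "\<exists>m::nat. int_interval (\<mu> * real m - \<sigma> * real m powr (5/8))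
                               (\<mu> * real m + \<sigma> * real m powr (5/8)) \<subseteq> I"
proof -
  obtain A where I: "I = {A .. A + int (card I) - 1}" and "0 \<le> A" "A \<le> int b ^ n"
    and "card I \<le> b ^ n" and card_I: "real (card I) = real b powr (3 * real n / 4)"
    using n_strict_eq_atLeastAtMost[OF assms(4)] assms(1) by auto
  define L where "L = real (card I)"
  have A: "0 \<le> real_of_int A" "real_of_int A \<le> real b ^ n"
    using \<open>0 \<le> A\<close> \<open>A \<le> int b ^ n\<close> by (simp, metis of_int_le_iff of_int_of_nat_eq of_int_power)
  have "L \<le> real b ^ n"
    unfolding L_def using \<open>card I \<le> b ^ n\<close> by (simp flip: of_nat_power)
  have "1 / real b > 0"
    using assms(1) by simp
  with assms(2) have "\<mu> > 0"
    by linarith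
  moreover have "0 \<le> real_of_int A + L / 2"
    unfolding L_def using A by simp
  ultimately obtain m :: nat where m: "\<mu> * real m \<le> real_of_int A + L / 2"
    "real_of_int A + L / 2 < \<mu> * real m + \<mu>"
    using ex_nat_mult_le_less by blast
  have "\<mu> * real m \<le> 2 * real b ^ n"
    using m(1) A \<open>L \<le> real b ^ n\<close> zero_le_power[of "real b" n] by linarith
  then have "real m \<le> real b ^ (n + 2)"
    by (rule le_power_add_two_if_mult_le[OF assms(1,2)])
  then have "\<sigma> * real m powr (5/8) \<le> \<sigma> * (real b ^ (n + 2)) powr (5/8)"
    using assms(3) by (intro mult_left_mono powr_mono2) auto
  then have "\<sigma> * real m powr (5/8) + \<mu> + 1 \<le> L / 2"
    using small card_I unfolding L_def by linarith
  then have "real_of_int A \<le> \<mu> * real m - \<sigma> * real m powr (5/8)"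
    and "\<mu> * real m + \<sigma> * real m powr (5/8) \<le> real_of_int (A + int (card I) - 1)"
    using m unfolding L_def by simp_all
  then have "int_interval (\<mu> * real m - \<sigma> * real m powr (5/8))
      (\<mu> * real m + \<sigma> * real m powr (5/8)) \<subseteq> {A .. A + int (card I) - 1}"
    by (rule int_interval_subset_atLeastAtMost)
  then show ?thesis
    using I by auto
qed

theorem lemma4p2:
  fixes b :: nat and h :: "nat \<Rightarrow> nat"
  assumes "b > 1" and "h 0 = 0" and "h 1 = 1"
  shows "\<exists>N::nat. \<forall>n>N. \<forall>I. n_strict b n I \<longrightarrow>
    (\<exists>m::nat. int_interval (digit_mean b h * real m - digit_sd b h * real m powr (5/8))
                            (digit_mean b h * real m + digit_sd b h * real m powr (5/8)) \<subseteq> I)"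
proof -
  have "eventually (\<lambda>n. digit_sd b h * (real b ^ (n + 2)) powr (5/8) + (digit_mean b h + 1)
      \<le> real b powr (3 * real n / 4) / 2) sequentially"
    using assms(1) by (intro eventually_powr_five_eighths_le_powr_three_quarters) simp
  then obtain N where "\<forall>n\<ge>N. digit_sd b h * (real b ^ (n + 2)) powr (5/8) + (digit_mean b h + 1)
      \<le> real b powr (3 * real n / 4) / 2"
    unfolding eventually_sequentially by blast
  then show ?thesis
    using window_subset_n_strict[OF assms(1) _ digit_sd_nonneg] digit_mean_ge_inverse_base[of b h] assms
    by (intro exI[of _ N]) auto
qed

end
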